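(* Let $P$ be a finite set of points in $\mathbb{R}^2$ in general position. For all vertices $u,v$ of the convex hull of $P$ and all points $p\in A(u)\setminus A(v)$, after deleting $v$ from $P$, the point $p$ belongs to $A(u)'$, the set of points active for $u$ with respect to $P\setminus\{v\}$.
   Context: Convex layers: $L^1$ is the set of vertices of the convex hull of the current point set, $L^2$ the set of vertices of the convex hull of the remaining points after removing $L^1$. A point $p$ is active for $u\in L^1$ if, upon deleting $u$ and recomputing the first and second convex layers, $p$ moves to the first layer; $A(u)$ is the set of points active for $u$. *)

theory Defs
  imports "HOL-Analysis.Analysis"
begin

definition layer1 :: "(real^2) set \<Rightarrow> (real^2) set" where
  "layer1 P = {x \<in> P. x extreme_point_of (convex hull P)}"

definition layer2 :: "(real^2) set \<Rightarrow> (real^2) set" where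
  "layer2 P = layer1 (P - layer1 P)"

definition active :: "(real^2) set \<Rightarrow> real^2 \<Rightarrow> (real^2) set" where
  "active P u = {p \<in> layer2 P. p \<in> layer1 (P - {u})}"

definition general_position :: "(real^2) set \<Rightarrow> bool" where
  "general_position P \<longleftrightarrow>
     (\<forall>a\<in>P. \<forall>b\<in>P. \<forall>c\<in>P. a \<noteq> b \<and> a \<noteq> c \<and> b \<noteq> c \<longrightarrow> \<not> collinear {a, b, c})"

end

theory Submission
  imports Defs
begin

text \<open>Being an extreme point is inherited by every subset still containing the point, so
  deleting points can only promote points outward, never demote them. Hence p, which is on
  the first layer of P - {u}, stays there after v is also removed; and since p is not on the
  first layer of P - {v}, it lies among the remaining points of P - {v}, which are remaining
  points of P, on whose hull p was already extreme.\<close>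

lemma extreme_point_of_subset:
  assumes "x extreme_point_of S" "T \<subseteq> S" "x \<in> T"
  shows "x extreme_point_of T"
  using assms unfolding extreme_point_of_def by blast

lemma layer1_subset: "layer1 S \<subseteq> S"
  unfolding layer1_def by blast

lemma layer1_Int_subset:
  assumes "T \<subseteq> S"
  shows "layer1 S \<inter> T \<subseteq> layer1 T"
proof
  fix x assume "x \<in> layer1 S \<inter> T"
  then have "x extreme_point_of convex hull S" "x \<in> T"
    unfolding layer1_def by auto
  moreover have "convex hull T \<subseteq> convex hull S"
    using assms by (rule hull_mono)
  ultimately have "x extreme_point_of convex hull T"
    by (blast intro: extreme_point_of_subset hull_inc)
  with \<open>x \<in> T\<close> show "x \<in> layer1 T"
    unfolding layer1_def by blast
qed

lemma Diff_layer1_mono: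
  assumes "T \<subseteq> S"
  shows "T - layer1 T \<subseteq> S - layer1 S"
  using assms layer1_Int_subset[OF assms] by blast

theorem lemma3:
  fixes P :: "(real^2) set" and u v p :: "real^2"
  assumes "finite P"
    and "general_position P"
    and "u \<in> layer1 P" and "v \<in> layer1 P"
    and "p \<in> active P u - active P v"
  shows "p \<in> active (P - {v}) u"
proof -
  have p2: "p \<in> layer2 P" and pu: "p \<in> layer1 (P - {u})" and pv: "p \<notin> layer1 (P - {v})"
    using assms(5) unfolding active_def by auto
  have "p \<in> P - layer1 P"
    using p2 layer1_subset unfolding layer2_def by blast
  with assms(4) have pT: "p \<in> P - {v} - layer1 (P - {v})"
    using pv by blast
  then have "p \<in> P - {v} - {u}"
    using pu layer1_subset by blast
  then have "p \<in> layer1 (P - {v} - {u})"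
    using pu layer1_Int_subset[of "P - {v} - {u}" "P - {u}"] by blast
  moreover have "p \<in> layer2 (P - {v})"
    using layer1_Int_subset[OF Diff_layer1_mono[of "P - {v}" P]] p2 pT
    unfolding layer2_def by blast
  ultimately show ?thesis
    unfolding active_def by blast
qed

end
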